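(* Let $(X,d)$ be a compact metric space, $\Lambda$ a finite nonempty set, and $\mathcal{F}=\{X; f_{\lambda}\mid\lambda\in\Lambda\}$ a parameterized iterated function system such that each $f_\lambda:X\to X$ is continuous and surjective. If $\mathcal{F}$ has the asymptotic average shadowing property, then $\mathcal{F}$ is chain transitive.
   Context: For $\sigma=\{\lambda_0,\lambda_1,\dots\}\in\Lambda^{\mathbb{Z}_+}$ write $\mathcal{F}_{\sigma_n}=f_{\lambda_{n-1}}\circ\cdots\circ f_{\lambda_0}$ ($\mathcal{F}_{\sigma_0}$ the identity). A sequence $\{x_i\}_{i\ge0}$ in $X$ is an asymptotic average pseudo-orbit of $\mathcal{F}$ if there is $\sigma=\{\lambda_0,\lambda_1,\dots\}\in\Lambda^{\mathbb{Z}_+}$ with $\lim_{n\to\infty}\frac1n\sum_{i=0}^{n-1}d(f_{\lambda_i}(x_i),x_{i+1})=0$; it is asymptotically shadowed in average by $z\in X$ if there is $\sigma\in\Lambda^{\mathbb{Z}_+}$ with $\lim_{n\to\infty}\frac1n\sum_{i=0}^{n-1}d(\mathcal{F}_{\sigma_i}(z),x_i)=0$. $\mathcal{F}$ has the asymptotic average shadowing property if every asymptotic average pseudo-orbit is asymptotically shadowed in average by some point of $X$. For $\delta>0$, a $\delta$-chain from $x$ to $y$ is a finite sequence $x=x_0,x_1,\dots,x_b=y$ in $X$ together with $\lambda_0,\dots,\lambda_{b-1}\in\Lambda$ such that $d(f_{\lambda_i}(x_i),x_{i+1})<\delta$ for all $0\le i<b$. $\mathcal{F}$ is chain transitive if for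 all $x,y\in X$ and every $\delta>0$ there is a $\delta$-chain of $\mathcal{F}$ from $x$ to $y$. *)

theory Defs
  imports "HOL-Analysis.Analysis"
begin

primrec iter_comp :: "('b \<Rightarrow> 'a \<Rightarrow> 'a) \<Rightarrow> (nat \<Rightarrow> 'b) \<Rightarrow> nat \<Rightarrow> 'a \<Rightarrow> 'a" where
  "iter_comp f \<sigma> 0 = id"
| "iter_comp f \<sigma> (Suc n) = f (\<sigma> n) \<circ> iter_comp f \<sigma> n"

definition asymp_avg_pseudo_orbit ::
  "'a::metric_space set \<Rightarrow> 'b set \<Rightarrow> ('b \<Rightarrow> 'a \<Rightarrow> 'a) \<Rightarrow> (nat \<Rightarrow> 'a) \<Rightarrow> bool" where
  "asymp_avg_pseudo_orbit X L f x \<longleftrightarrow>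
     (\<forall>i. x i \<in> X) \<and>
     (\<exists>\<sigma>. (\<forall>i. \<sigma> i \<in> L) \<and>
        (\<lambda>n. (\<Sum>i<n. dist (f (\<sigma> i) (x i)) (x (Suc i))) / real n) \<longlonglongrightarrow> 0)"

definition asymp_shadowed_in_avg ::
  "'a::metric_space set \<Rightarrow> 'b set \<Rightarrow> ('b \<Rightarrow> 'a \<Rightarrow> 'a) \<Rightarrow> (nat \<Rightarrow> 'a) \<Rightarrow> 'a \<Rightarrow> bool" where
  "asymp_shadowed_in_avg X L f x z \<longleftrightarrow>
     (\<exists>\<sigma>. (\<forall>i. \<sigma> i \<in> L) \<and>
        (\<lambda>n. (\<Sum>i<n. dist (iter_comp f \<sigma> i z) (x i)) / real n) \<longlonglongrightarrow> 0)"

definition asymp_avg_shadowing ::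
  "'a::metric_space set \<Rightarrow> 'b set \<Rightarrow> ('b \<Rightarrow> 'a \<Rightarrow> 'a) \<Rightarrow> bool" where
  "asymp_avg_shadowing X L f \<longleftrightarrow>
     (\<forall>x. asymp_avg_pseudo_orbit X L f x \<longrightarrow> (\<exists>z\<in>X. asymp_shadowed_in_avg X L f x z))"

definition delta_chain ::
  "'a::metric_space set \<Rightarrow> 'b set \<Rightarrow> ('b \<Rightarrow> 'a \<Rightarrow> 'a) \<Rightarrow> real \<Rightarrow> 'a \<Rightarrow> 'a \<Rightarrow> bool" where
  "delta_chain X L f \<delta> x y \<longleftrightarrow>
     (\<exists>b::nat. \<exists>xs::nat \<Rightarrow> 'a. \<exists>ls::nat \<Rightarrow> 'b.
        xs 0 = x \<and> xs b = y \<and> (\<forall>i\<le>b. xs i \<in> X) \<and>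
        (\<forall>i<b. ls i \<in> L \<and> dist (f (ls i) (xs i)) (xs (Suc i)) < \<delta>))"

definition chain_transitive ::
  "'a::metric_space set \<Rightarrow> 'b set \<Rightarrow> ('b \<Rightarrow> 'a \<Rightarrow> 'a) \<Rightarrow> bool" where
  "chain_transitive X L f \<longleftrightarrow>
     (\<forall>x\<in>X. \<forall>y\<in>X. \<forall>\<delta>>0. delta_chain X L f \<delta> x y)"

end

theory Submission
  imports Defs "HOL-Library.Discrete_Functions" "HOL-Real_Asymp.Real_Asymp"
begin

text \<open>Fix a parameter \<open>l\<^sub>0\<close> and write \<open>F = f l\<^sub>0\<close>. Given \<open>x, y \<in> X\<close>, glue together, on each dyadic block
  \<open>[2\<^sup>k, 2\<^sup>k\<^sup>+\<^sup>1)\<close>, the first half of the forward \<open>F\<close>-orbit of \<open>x\<close> and the last half of a backward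
  \<open>F\<close>-orbit ending at \<open>y\<close> (it exists by surjectivity). Only two jumps per block occur, i.e.
  \<open>O(log n)\<close> jumps up to time \<open>n\<close>, so this is an asymptotic average pseudo-orbit. A point shadowing it
  in average is, in some block, close to it at a time \<open>i\<close> in the first half and at a time \<open>j\<close> in
  the second half. Following the pseudo-orbit from \<open>x\<close> to time \<open>i\<close>, then the shadowing orbit up to
  time \<open>j\<close>, then the pseudo-orbit again up to \<open>y\<close>, gives a \<open>\<delta>\<close>-chain; uniform continuity of the
  finitely many maps controls the switch at time \<open>i\<close>.\<close>

definition dyadic_jump :: "nat \<Rightarrow> bool" where
  "dyadic_jump n \<longleftrightarrow> n = 2 ^ floor_log n \<or> n = 2 ^ floor_log n + 2 ^ (floor_log n - 1)"

definition glued_orbit :: "('a \<Rightarrow> 'a) \<Rightarrow> 'a \<Rightarrow> (nat \<Rightarrow> 'a) \<Rightarrow> nat \<Rightarrow> 'a" where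
  "glued_orbit F x yb n =
    (let k = floor_log n; r = n - 2 ^ k in if r < 2 ^ (k - 1) then (F ^^ r) x else yb (2 ^ k - 1 - r))"

lemma floor_log_dyadic_block: "r < 2 ^ k \<Longrightarrow> floor_log (2 ^ k + r) = k"
  by (rule floor_log_eqI) auto

lemma glued_orbit_first_half:
  assumes "r < 2 ^ (k - 1)"
  shows "glued_orbit F x yb (2 ^ k + r) = (F ^^ r) x"
proof -
  have "(2::nat) ^ (k - 1) \<le> 2 ^ k"
    by (rule power_increasing) auto
  with assms have "floor_log (2 ^ k + r) = k"
    by (intro floor_log_dyadic_block) linarith
  with assms show ?thesis
    by (simp add: glued_orbit_def Let_def)
qed

lemma glued_orbit_second_half:
  assumes "2 ^ (k - 1) \<le> r" "r < 2 ^ k"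
  shows "glued_orbit F x yb (2 ^ k + r) = yb (2 ^ k - 1 - r)"
  using assms floor_log_dyadic_block[OF assms(2)] by (simp add: glued_orbit_def Let_def)

lemma glued_orbit_block_start: "glued_orbit F x yb (2 ^ k) = x"
  using glued_orbit_first_half[of 0 k F x yb] by simp

lemma glued_orbit_block_end:
  assumes "1 \<le> k"
  shows "glued_orbit F x yb (2 ^ Suc k - 1) = yb 0"
proof -
  have "(2::nat) ^ Suc k - 1 = 2 ^ k + (2 ^ k - 1)" "(2::nat) ^ (k - 1) \<le> 2 ^ k - 1"
    using assms by (cases k; simp)+
  then show ?thesis
    using glued_orbit_second_half[of k "2 ^ k - 1" F x yb] by simp
qed

lemma glued_orbit_in:
  assumes "F ` X \<subseteq> X" "x \<in> X" "\<And>m. yb m \<in> X"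
  shows "glued_orbit F x yb n \<in> X"
proof -
  have "(F ^^ r) x \<in> X" for r
    by (induction r) (use assms in auto)
  then show ?thesis
    using assms(3) by (simp add: glued_orbit_def Let_def)
qed

lemma not_dyadic_jump_in_block:
  assumes "2 ^ k < n" "n < 2 ^ Suc k" "n \<noteq> 2 ^ k + 2 ^ (k - 1)"
  shows "\<not> dyadic_jump n"
proof -
  have "floor_log n = k"
    using assms(1,2) by (intro floor_log_eqI) auto
  with assms show ?thesis
    unfolding dyadic_jump_def by simp
qed

lemma glued_orbit_step:
  assumes yb: "\<And>m. F (yb (Suc m)) = yb m" and no_jump: "\<not> dyadic_jump (Suc n)"
  shows "glued_orbit F x yb (Suc n) = F (glued_orbit F x yb n)"
proof -
  define k where "k = floor_log (Suc n)"
  have "2 ^ k \<le> Suc n" "Suc n < 2 ^ Suc k"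
    unfolding k_def using floor_log_exp2_le[of "Suc n"] floor_log_exp2_gt[of "Suc n"] by auto
  moreover have "Suc n \<noteq> 2 ^ k" "Suc n \<noteq> 2 ^ k + 2 ^ (k - 1)"
    using no_jump unfolding dyadic_jump_def k_def by auto
  ultimately obtain r where n: "n = 2 ^ k + r" and r: "Suc r < 2 ^ k" "Suc r \<noteq> 2 ^ (k - 1)"
    by (metis add_Suc_right le_Suc_eq le_iff_add nat_add_left_cancel_less power_Suc mult_2)
  consider "Suc r < 2 ^ (k - 1)" | "2 ^ (k - 1) \<le> r"
    using r(2) by linarith
  then show ?thesis
  proof cases
    case 1
    then show ?thesis
      using glued_orbit_first_half[of "Suc r" k F x yb] glued_orbit_first_half[of r k F x yb] n
      by (simp flip: add_Suc_right)
  next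
    case 2
    have "glued_orbit F x yb (Suc n) = yb (2 ^ k - 1 - Suc r)"
      using glued_orbit_second_half[of k "Suc r"] 2 r n by (simp flip: add_Suc_right)
    moreover have "glued_orbit F x yb n = yb (Suc (2 ^ k - 1 - Suc r))"
      using glued_orbit_second_half[of k r] 2 r n by (simp add: Suc_diff_Suc)
    ultimately show ?thesis
      using yb by simp
  qed
qed

lemma card_dyadic_jumps_le: "card {i. i < n \<and> dyadic_jump (Suc i)} \<le> 2 * (floor_log n + 1)"
proof -
  let ?A = "(\<lambda>m. (2::nat) ^ m - 1) ` {..floor_log n}" and ?B = "(\<lambda>m. (2::nat) ^ m + 2 ^ (m - 1) - 1) ` {..floor_log n}"
  have "{i. i < n \<and> dyadic_jump (Suc i)} \<subseteq> ?A \<union> ?B"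
  proof
    fix i assume "i \<in> {i. i < n \<and> dyadic_jump (Suc i)}"
    then have "floor_log (Suc i) \<le> floor_log n" "dyadic_jump (Suc i)"
      by (auto intro: floor_log_le_iff)
    then show "i \<in> ?A \<union> ?B"
      unfolding dyadic_jump_def by (metis (no_types, lifting) UnI1 UnI2 atMost_iff diff_Suc_1 image_eqI)
  qed
  then have "card {i. i < n \<and> dyadic_jump (Suc i)} \<le> card (?A \<union> ?B)"
    by (intro card_mono) auto
  also have "\<dots> \<le> card ?A + card ?B"
    by (rule card_Un_le)
  also have "\<dots> \<le> card {..floor_log n} + card {..floor_log n}"
    by (intro add_mono card_image_le) auto
  finally show ?thesis
    by simp
qed

lemma dyadic_jumps_density_zero:
  "(\<lambda>n. real (card {i. i < n \<and> dyadic_jump (Suc i)}) / real n) \<longlonglongrightarrow> 0"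
proof (rule tendsto_sandwich[OF _ _ tendsto_const])
  show "(\<lambda>n::nat. 2 * (log 2 (real n) + 1) / real n) \<longlonglongrightarrow> 0"
    by real_asymp
  show "\<forall>\<^sub>F n in sequentially. 0 \<le> real (card {i. i < n \<and> dyadic_jump (Suc i)}) / real n"
    by simp
  show "\<forall>\<^sub>F n in sequentially.
      real (card {i. i < n \<and> dyadic_jump (Suc i)}) / real n \<le> 2 * (log 2 (real n) + 1) / real n"
    using eventually_gt_at_top[of "0::nat"]
  proof eventually_elim
    case (elim n)
    then have "real (floor_log n) \<le> log 2 (real n)"
      by (simp add: floor_log_altdef)
    then have "real (card {i. i < n \<and> dyadic_jump (Suc i)}) \<le> 2 * (log 2 (real n) + 1)"
      using of_nat_mono[OF card_dyadic_jumps_le[of n], where 'a=real] by simp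
    then show ?case
      by (simp add: divide_right_mono)
  qed
qed

lemma Cesaro_mean_zero_sparse_support:
  fixes d :: "nat \<Rightarrow> real"
  assumes "\<And>i. 0 \<le> d i" "\<And>i. d i \<le> D" "\<And>i. \<not> P i \<Longrightarrow> d i = 0"
    and density: "(\<lambda>n. real (card {i. i < n \<and> P i}) / real n) \<longlonglongrightarrow> 0"
  shows "(\<lambda>n. (\<Sum>i<n. d i) / real n) \<longlonglongrightarrow> 0"
proof (rule tendsto_sandwich[OF _ _ tendsto_const])
  show "(\<lambda>n. D * (real (card {i. i < n \<and> P i}) / real n)) \<longlonglongrightarrow> 0"
    using tendsto_mult_right_zero[OF density] .
  show "\<forall>\<^sub>F n in sequentially. 0 \<le> (\<Sum>i<n. d i) / real n"
    using assms(1) by (simp add: sum_nonneg)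
  have "(\<Sum>i<n. d i) \<le> D * real (card {i. i < n \<and> P i})" for n
  proof -
    have "(\<Sum>i<n. d i) = (\<Sum>i\<in>{i. i < n \<and> P i}. d i)"
      using assms(3) by (intro sum.mono_neutral_right) auto
    also have "\<dots> \<le> (\<Sum>i\<in>{i. i < n \<and> P i}. D)"
      by (intro sum_mono assms(2))
    finally show ?thesis
      by (simp add: mult.commute)
  qed
  then show "\<forall>\<^sub>F n in sequentially. (\<Sum>i<n. d i) / real n \<le> D * (real (card {i. i < n \<and> P i}) / real n)"
    by (simp add: divide_right_mono)
qed

lemma asymp_avg_pseudo_orbit_glued_orbit:
  assumes "bounded X" "l \<in> L" "f l ` X \<subseteq> X" "x \<in> X"
    and "\<And>m. yb m \<in> X" "\<And>m. f l (yb (Suc m)) = yb m"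
  shows "asymp_avg_pseudo_orbit X L f (glued_orbit (f l) x yb)"
proof -
  let ?p = "glued_orbit (f l) x yb"
  have p_in: "?p n \<in> X" for n
    using glued_orbit_in assms(3-5) .
  obtain D where D: "\<And>u v. u \<in> X \<Longrightarrow> v \<in> X \<Longrightarrow> dist u v \<le> D"
    using assms(1) unfolding bounded_two_points by blast
  have "(\<lambda>n. (\<Sum>i<n. dist (f l (?p i)) (?p (Suc i))) / real n) \<longlonglongrightarrow> 0"
  proof (rule Cesaro_mean_zero_sparse_support[OF _ _ _ dyadic_jumps_density_zero])
    show "dist (f l (?p i)) (?p (Suc i)) \<le> D" for i
      using D assms(3) p_in by blast
    show "dist (f l (?p i)) (?p (Suc i)) = 0" if "\<not> dyadic_jump (Suc i)" for i
      using glued_orbit_step[of "f l" yb, OF assms(6) that] by simp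
  qed simp
  then show ?thesis
    unfolding asymp_avg_pseudo_orbit_def using p_in assms(2) by (intro conjI allI exI[of _ "\<lambda>_. l"]) auto
qed

lemma Cesaro_mean_zero_small_in_block_halves:
  fixes e :: "nat \<Rightarrow> real"
  assumes e_nonneg: "\<And>i. 0 \<le> e i" and mean: "(\<lambda>n. (\<Sum>i<n. e i) / real n) \<longlonglongrightarrow> 0" and "0 < \<eta>"
  obtains k i j where "1 \<le> k" "2 ^ k \<le> i" "i < 2 ^ k + 2 ^ (k - 1)" "e i < \<eta>"
    "2 ^ k + 2 ^ (k - 1) \<le> j" "j < 2 ^ Suc k" "e j < \<eta>"
proof -
  obtain N where N: "\<And>n. N \<le> n \<Longrightarrow> (\<Sum>i<n. e i) / real n < \<eta> / 4"
    using order_tendstoD(2)[OF mean, of "\<eta> / 4"] \<open>0 < \<eta>\<close> unfolding eventually_sequentially by auto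
  define k where "k = Suc N"
  have k_pow: "(2::nat) ^ Suc k = 4 * 2 ^ (k - 1)" "(2::nat) ^ k = 2 * 2 ^ (k - 1)"
    "(2::real) ^ k = 2 * 2 ^ (k - 1)"
    by (simp_all add: k_def)
  have "N < 2 ^ Suc k"
    by (rule less_trans[OF less_exp]) (simp add: k_def)
  then have small_mean: "(\<Sum>i<2 ^ Suc k. e i) / 2 ^ Suc k < \<eta> / 4"
    using N[of "2 ^ Suc k"] by simp
  text \<open>A quarter of the indices below \<open>2\<^sup>k\<^sup>+\<^sup>1\<close> cannot all carry weight \<open>\<ge> \<eta>\<close>.\<close>
  have some_small: "\<exists>i\<in>{m..<m + 2 ^ (k - 1)}. e i < \<eta>" if "m + 2 ^ (k - 1) \<le> 2 ^ Suc k" for m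
  proof (rule ccontr)
    assume "\<not> ?thesis"
    then have "\<eta> * 2 ^ (k - 1) \<le> (\<Sum>i\<in>{m..<m + 2 ^ (k - 1)}. e i)"
      using sum_mono[of "{m..<m + 2 ^ (k - 1)}" "\<lambda>_. \<eta>" e] by (simp add: not_less mult.commute)
    also have "\<dots> \<le> (\<Sum>i<2 ^ Suc k. e i)"
      using that e_nonneg by (intro sum_mono2) auto
    finally show False
      using small_mean by (simp add: k_pow field_simps)
  qed
  obtain i where "i \<in> {2 ^ k..<2 ^ k + 2 ^ (k - 1)}" "e i < \<eta>"
    using some_small[of "2 ^ k"] by (auto simp: k_pow)
  moreover obtain j where "j \<in> {2 ^ k + 2 ^ (k - 1)..<2 ^ k + 2 ^ (k - 1) + 2 ^ (k - 1)}" "e j < \<eta>"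
    using some_small[of "2 ^ k + 2 ^ (k - 1)"] by (auto simp: k_pow)
  ultimately show ?thesis
    using that[of k i j] by (auto simp: k_def k_pow)
qed

lemma delta_chain_splice:
  fixes p G :: "nat \<Rightarrow> 'a::metric_space"
  assumes "0 < \<delta>" "a \<le> i" "i < j" "j \<le> b"
    and "l\<^sub>0 \<in> L" "\<And>s. \<sigma> s \<in> L" "\<And>s. p s \<in> X" "\<And>s. G s \<in> X"
    and orbit: "\<And>s. G (Suc s) = f (\<sigma> s) (G s)"
    and p_step: "\<And>s. a \<le> s \<Longrightarrow> s < b \<Longrightarrow> \<not> (i \<le> s \<and> s < j) \<Longrightarrow> p (Suc s) = f l\<^sub>0 (p s)"
    and enter: "dist (f (\<sigma> i) (p i)) (G (Suc i)) < \<delta>/2"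
    and leave: "dist (G j) (p j) < \<delta>/2"
  shows "delta_chain X L f \<delta> (p a) (p b)"
proof -
  define c where "c s = (if i < s \<and> s < j then G s else p s)" for s
  define ls where "ls s = (if i \<le> s \<and> s < j then \<sigma> s else l\<^sub>0)" for s
  have c_in: "c s \<in> X" and ls_in: "ls s \<in> L" for s
    using assms(5-8) unfolding c_def ls_def by auto
  have step: "dist (f (ls s) (c s)) (c (Suc s)) < \<delta>" if "a \<le> s" "s < b" for s
  proof (cases "i \<le> s \<and> s < j")
    case True
    have "dist (f (\<sigma> s) (c s)) (G (Suc s)) < \<delta>/2"
      using enter orbit[of s] True \<open>0 < \<delta>\<close> unfolding c_def by (cases "s = i") auto
    moreover have "dist (G (Suc s)) (c (Suc s)) < \<delta>/2"
      using leave True \<open>0 < \<delta>\<close> unfolding c_def by (cases "Suc s = j") (auto simp: dist_commute)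
    moreover have "ls s = \<sigma> s"
      using True unfolding ls_def by simp
    ultimately show ?thesis
      using dist_triangle[of "f (\<sigma> s) (c s)" "c (Suc s)" "G (Suc s)"] by simp
  next
    case False
    then show ?thesis
      using p_step[OF that False] \<open>0 < \<delta>\<close> unfolding c_def ls_def by auto
  qed
  have "c a = p a" "c b = p b"
    using assms(2-4) unfolding c_def by auto
  then show ?thesis
    unfolding delta_chain_def
    using step c_in ls_in \<open>a \<le> i\<close> \<open>i < j\<close> \<open>j \<le> b\<close>
    by (intro exI[of _ "b - a"] exI[of _ "\<lambda>t. c (a + t)"] exI[of _ "\<lambda>t. ls (a + t)"]) auto
qed

lemma delta_chain_across_dyadic_block:
  fixes G :: "nat \<Rightarrow> 'a::metric_space"
  assumes "0 < \<delta>" "l\<^sub>0 \<in> L" "\<And>s. \<sigma> s \<in> L"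
    and "f l\<^sub>0 ` X \<subseteq> X" "x \<in> X" "\<And>m. yb m \<in> X" "\<And>m. f l\<^sub>0 (yb (Suc m)) = yb m"
    and "\<And>s. G s \<in> X" "\<And>s. G (Suc s) = f (\<sigma> s) (G s)"
    and k: "1 \<le> k" and i: "2 ^ k \<le> i" "i < 2 ^ k + 2 ^ (k - 1)"
    and j: "2 ^ k + 2 ^ (k - 1) \<le> j" "j < 2 ^ Suc k"
    and "dist (f (\<sigma> i) (glued_orbit (f l\<^sub>0) x yb i)) (G (Suc i)) < \<delta>/2"
    and "dist (G j) (glued_orbit (f l\<^sub>0) x yb j) < \<delta>/2"
  shows "delta_chain X L f \<delta> x (yb 0)"
proof -
  define p where "p = glued_orbit (f l\<^sub>0) x yb"
  have "delta_chain X L f \<delta> (p (2 ^ k)) (p (2 ^ Suc k - 1))"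
  proof (rule delta_chain_splice[where l\<^sub>0 = l\<^sub>0 and \<sigma> = \<sigma> and G = G])
    fix s assume "2 ^ k \<le> s" "s < 2 ^ Suc k - 1" "\<not> (i \<le> s \<and> s < j)"
    with i(2) j(1) have "\<not> dyadic_jump (Suc s)"
      by (intro not_dyadic_jump_in_block[where k = k]) auto
    then show "p (Suc s) = f l\<^sub>0 (p s)"
      unfolding p_def by (rule glued_orbit_step[of "f l\<^sub>0" yb, OF assms(7)])
  next
    show "p s \<in> X" for s
      unfolding p_def using assms(4-6) by (rule glued_orbit_in)
  qed (use assms i j in \<open>auto simp: p_def\<close>)
  then show ?thesis
    unfolding p_def glued_orbit_block_start glued_orbit_block_end[OF k] .
qed

lemma uniform_modulus_finite_family:
  fixes f :: "'b \<Rightarrow> 'a::metric_space \<Rightarrow> 'c::metric_space"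
  assumes "compact X" "finite L" "\<And>l. l \<in> L \<Longrightarrow> continuous_on X (f l)" "0 < \<epsilon>"
  obtains \<eta> where "0 < \<eta>"
    "\<And>l u v. l \<in> L \<Longrightarrow> u \<in> X \<Longrightarrow> v \<in> X \<Longrightarrow> dist u v < \<eta> \<Longrightarrow> dist (f l u) (f l v) < \<epsilon>"
proof -
  have "\<forall>l\<in>L. \<forall>\<^sub>F \<eta> in at_right 0. \<forall>u\<in>X. \<forall>v\<in>X. dist u v < \<eta> \<longrightarrow> dist (f l u) (f l v) < \<epsilon>"
  proof
    fix l assume "l \<in> L"
    then have "uniformly_continuous_on X (f l)"
      using assms(1,3) by (blast intro: compact_uniformly_continuous)
    then obtain d where "0 < d" "\<forall>u\<in>X. \<forall>v\<in>X. dist u v < d \<longrightarrow> dist (f l u) (f l v) < \<epsilon>"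
      using \<open>0 < \<epsilon>\<close> unfolding uniformly_continuous_on_def by (metis dist_commute)
    then show "\<forall>\<^sub>F \<eta> in at_right 0. \<forall>u\<in>X. \<forall>v\<in>X. dist u v < \<eta> \<longrightarrow> dist (f l u) (f l v) < \<epsilon>"
      unfolding eventually_at_right_field by (intro exI[of _ d]) auto
  qed
  then have "\<forall>\<^sub>F \<eta> in at_right 0.
      \<forall>l\<in>L. \<forall>u\<in>X. \<forall>v\<in>X. dist u v < \<eta> \<longrightarrow> dist (f l u) (f l v) < \<epsilon>"
    by (rule eventually_ball_finite[OF assms(2)])
  then have "\<forall>\<^sub>F \<eta> in at_right 0. 0 < \<eta> \<and>
      (\<forall>l\<in>L. \<forall>u\<in>X. \<forall>v\<in>X. dist u v < \<eta> \<longrightarrow> dist (f l u) (f l v) < \<epsilon>)"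
    by (intro eventually_conj eventually_at_right_less)
  then obtain \<eta> where "0 < \<eta>"
    "\<forall>l\<in>L. \<forall>u\<in>X. \<forall>v\<in>X. dist u v < \<eta> \<longrightarrow> dist (f l u) (f l v) < \<epsilon>"
    using eventually_happens'[OF trivial_limit_at_right_real] by blast
  then show ?thesis
    using that by auto
qed

lemma backward_orbit_exists:
  assumes "X \<subseteq> F ` X" "y \<in> X"
  obtains yb where "yb 0 = y" "\<And>m. yb m \<in> X" "\<And>m. F (yb (Suc m)) = yb m"
proof -
  define yb where "yb = rec_nat y (\<lambda>_ w. SOME v. v \<in> X \<and> F v = w)"
  have preimage: "\<exists>v. v \<in> X \<and> F v = w" if "w \<in> X" for w
    using that assms(1) by blast
  have yb_in: "yb m \<in> X" for m
    by (induction m) (use assms(2) someI_ex[OF preimage] in \<open>auto simp: yb_def\<close>)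
  show ?thesis
  proof
    show "yb 0 = y" by (simp add: yb_def)
    show "F (yb (Suc m)) = yb m" for m
      using someI_ex[OF preimage[OF yb_in[of m]]] by (simp add: yb_def)
  qed (rule yb_in)
qed

lemma iter_comp_in:
  assumes "\<And>l. l \<in> L \<Longrightarrow> f l ` X \<subseteq> X" "\<And>i. \<sigma> i \<in> L" "z \<in> X"
  shows "iter_comp f \<sigma> n z \<in> X"
  using assms by (induction n) auto

theorem mainTheorem4:
  fixes X :: "'a::metric_space set" and L :: "'b set" and f :: "'b \<Rightarrow> 'a \<Rightarrow> 'a"
  assumes "compact X"
    and "finite L" and "L \<noteq> {}"
    and "\<And>l. l \<in> L \<Longrightarrow> continuous_on X (f l)"
    and "\<And>l. l \<in> L \<Longrightarrow> f l ` X = X"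
    and "asymp_avg_shadowing X L f"
  shows "chain_transitive X L f"
  unfolding chain_transitive_def
proof (intro ballI allI impI)
  fix x y and \<delta> :: real
  assume "x \<in> X" "y \<in> X" "0 < \<delta>"
  obtain l\<^sub>0 where "l\<^sub>0 \<in> L"
    using assms(3) by blast
  obtain yb where yb: "yb 0 = y" "\<And>m. yb m \<in> X" "\<And>m. f l\<^sub>0 (yb (Suc m)) = yb m"
    using backward_orbit_exists[of X "f l\<^sub>0" y] assms(5) \<open>l\<^sub>0 \<in> L\<close> \<open>y \<in> X\<close> by auto
  define p where "p = glued_orbit (f l\<^sub>0) x yb"
  have "asymp_avg_pseudo_orbit X L f p"
    unfolding p_def using assms(1,5) \<open>l\<^sub>0 \<in> L\<close> \<open>x \<in> X\<close> yb
    by (intro asymp_avg_pseudo_orbit_glued_orbit) (auto intro: compact_imp_bounded)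
  then obtain z \<sigma> where "z \<in> X" "\<And>s. \<sigma> s \<in> L"
    and shadow: "(\<lambda>n. (\<Sum>s<n. dist (iter_comp f \<sigma> s z) (p s)) / real n) \<longlonglongrightarrow> 0"
    using assms(6) unfolding asymp_avg_shadowing_def asymp_shadowed_in_avg_def by blast
  define G where "G s = iter_comp f \<sigma> s z" for s
  obtain \<eta> where "0 < \<eta>"
    and modulus: "\<And>l u v. l \<in> L \<Longrightarrow> u \<in> X \<Longrightarrow> v \<in> X \<Longrightarrow> dist u v < \<eta> \<Longrightarrow> dist (f l u) (f l v) < \<delta>/2"
    using uniform_modulus_finite_family[where f = f, OF assms(1,2,4) half_gt_zero[OF \<open>0 < \<delta>\<close>]] by blast
  obtain k i j where k: "1 \<le> k" and i: "2 ^ k \<le> i" "i < 2 ^ k + 2 ^ (k - 1)" "dist (G i) (p i) < min \<eta> (\<delta>/2)"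
    and j: "2 ^ k + 2 ^ (k - 1) \<le> j" "j < 2 ^ Suc k" "dist (G j) (p j) < min \<eta> (\<delta>/2)"
    using Cesaro_mean_zero_small_in_block_halves[OF _ shadow[folded G_def], of "min \<eta> (\<delta>/2)"]
      \<open>0 < \<eta>\<close> \<open>0 < \<delta>\<close> by auto
  have G_in: "G s \<in> X" for s
    unfolding G_def by (rule iter_comp_in[where L = L]) (use assms(5) \<open>\<And>s. \<sigma> s \<in> L\<close> \<open>z \<in> X\<close> in auto)
  have "dist (f (\<sigma> i) (p i)) (G (Suc i)) < \<delta>/2"
    using modulus[OF \<open>\<sigma> i \<in> L\<close> glued_orbit_in G_in] i(3) assms(5) \<open>l\<^sub>0 \<in> L\<close> \<open>x \<in> X\<close> yb(2)
    by (auto simp: p_def G_def dist_commute)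
  then show "delta_chain X L f \<delta> x y"
    using delta_chain_across_dyadic_block[where G = G, OF \<open>0 < \<delta>\<close> \<open>l\<^sub>0 \<in> L\<close> \<open>\<And>s. \<sigma> s \<in> L\<close>]
      assms(5) \<open>l\<^sub>0 \<in> L\<close> \<open>x \<in> X\<close> yb G_in k i j
    by (auto simp: p_def G_def)
qed

end
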